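(* Let $\{\xi_k\}$ be the sequence produced by Algorithm DFNDFL (described in the context). Then \[ \lim_{k\to\infty} \xi_k = 0. \]
   Context: Consider the problem $\min f(x)$ s.t. $x\in X\cap\mathcal{Z}$, where $X=\{x\in\mathbb{R}^n: l\le x\le u\}$ is compact (with $l_i<u_i$, and $l_i,u_i\in\mathbb{Z}$ for $i\in I^z$), $\mathcal{Z}=\{x\in\mathbb{R}^n: x_i\in\mathbb{Z},\ i\in I^z\}$, $I^c\cup I^z=\{1,\dots,n\}$, $I^c\cap I^z=\emptyset$, and $f$ is continuous (Lipschitz continuous with respect to $x_i$, $i\in I^c$). Discrete Search$(\tilde\alpha,w,p,\xi;\alpha)$: compute the largest $\bar\alpha$ with $w+\bar\alpha p\in X\cap\mathcal{Z}$, set $\alpha=\min\{\bar\alpha,\tilde\alpha\}$; if $\alpha>0$ and $f(w+\alpha p)\le f(w)-\xi$, repeatedly set $\beta=\min\{\bar\alpha,2\alpha\}$ and, while $f(w+\beta p)\le f(w)-\xi$, set $\alpha=\beta$, then return $\alpha$; otherwise return $\alpha=0$. Algorithm DFNDFL: start from $x_0\in X\cap\mathcal{Z}$, $\xi_0>0$, $\theta\in(0,1)$. At iteration $k$, Phase 1 performs a projected line search along a continuous direction producing $\tilde x_k\in X\cap\mathcal{Z}$ with $f(\tilde x_k)\le f(x_k)$. Phase 2.A sets $y^+=\tilde x_k$ and, while the working set $D$ of feasible primitive integer directions (directions $d\in\mathbb{Z}^n$ with $d_i=0$ for $i\in I^c$, $d_z$ having greatest common divisor of components equal to 1, and $\tilde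 x_k+d\in X\cap\mathcal{Z}$) is nonempty and $y^+=\tilde x_k$, picks $d\in D$, removes it, and runs the Discrete Search from $y=y^+$ along $d$ with tentative step $\tilde\alpha_k^{(d)}$ and decrease parameter $\xi_k$; on success $y^+=y+\alpha d$ (so $f(y^+)\le f(\tilde x_k)-\xi_k$), on failure $\tilde\alpha_{k+1}^{(d)}=\max\{1,\lfloor\tilde\alpha_k^{(d)}/2\rfloor\}$. Phase 2.B: if $y^+=\tilde x_k$ and the Discrete Search fails with tentative step $\tilde\alpha_k^{(d)}=1$ for all $d$ in the current direction set $D_k$, set $\xi_{k+1}=\theta\xi_k$ (and possibly enlarge $D_k$ with new feasible primitive directions); otherwise $\xi_{k+1}=\xi_k$. Phase 3 chooses any $x_{k+1}\in X\cap\mathcal{Z}$ with $f(x_{k+1})\le f(y^+)$. *)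

theory Defs
  imports "HOL-Analysis.Analysis"
begin

definition feas :: "real^'n \<Rightarrow> real^'n \<Rightarrow> 'n set \<Rightarrow> real^'n \<Rightarrow> bool" where
  "feas l u Iz x \<longleftrightarrow> (\<forall>i. l$i \<le> x$i \<and> x$i \<le> u$i) \<and> (\<forall>i\<in>Iz. x$i \<in> \<int>)"

definition rvec :: "int^'n \<Rightarrow> real^'n" where
  "rvec d = (\<chi> i. real_of_int (d$i))"

definition prim_dir :: "'n set \<Rightarrow> int^'n \<Rightarrow> bool" where
  "prim_dir Iz d \<longleftrightarrow> (\<forall>i. i \<notin> Iz \<longrightarrow> d$i = 0) \<and> Gcd ((\<lambda>i. d$i) ` Iz) = 1"

definition max_step :: "real^'n \<Rightarrow> real^'n \<Rightarrow> 'n set \<Rightarrow> real^'n \<Rightarrow> real^'n \<Rightarrow> nat" where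
  "max_step l u Iz w p = Max {a::nat. feas l u Iz (w + real a *\<^sub>R p)}"

text \<open>Expansion loop of the Discrete Search: beta = min abar (2 alpha); continue while
  beta improves on alpha and gives sufficient decrease (fuel argument only ensures totality).\<close>
fun ds_expand :: "nat \<Rightarrow> (nat \<Rightarrow> bool) \<Rightarrow> nat \<Rightarrow> nat \<Rightarrow> nat" where
  "ds_expand 0 ok ab a = a"
| "ds_expand (Suc n) ok ab a =
     (let b = min ab (2*a) in if a < b \<and> ok b then ds_expand n ok ab b else a)"

definition discrete_search ::
  "(real^'n \<Rightarrow> real) \<Rightarrow> real^'n \<Rightarrow> real^'n \<Rightarrow> 'n set \<Rightarrow> nat \<Rightarrow> real^'n \<Rightarrow> real^'n \<Rightarrow> real \<Rightarrow> nat" where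
  "discrete_search f l u Iz tstep w p xi =
     (let ab = max_step l u Iz w p;
          a = min ab tstep;
          ok = (\<lambda>b::nat. f (w + real b *\<^sub>R p) \<le> f w - xi)
      in if 0 < a \<and> ok a then ds_expand ab ok ab a else 0)"

text \<open>One iteration k of DFNDFL.  x = x_k, xt = x~_k, xi = xi_k, D = D_k (direction set),
  tstep k d = tentative step alpha~_k^(d), dord k = the order in which Phase 2.A picks the
  directions of D_k, yp k = y^+ tstep the end of Phase 2.A.\<close>
definition dfndfl_step ::
  "(real^'n \<Rightarrow> real) \<Rightarrow> real^'n \<Rightarrow> real^'n \<Rightarrow> 'n set \<Rightarrow> real \<Rightarrow>
   (nat \<Rightarrow> real^'n) \<Rightarrow> (nat \<Rightarrow> real^'n) \<Rightarrow> (nat \<Rightarrow> real) \<Rightarrow> (nat \<Rightarrow> (int^'n) set) \<Rightarrow>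
   (nat \<Rightarrow> int^'n \<Rightarrow> nat) \<Rightarrow> (nat \<Rightarrow> (int^'n) list) \<Rightarrow> (nat \<Rightarrow> real^'n) \<Rightarrow> nat \<Rightarrow> bool" where
  "dfndfl_step f l u Iz \<theta> x xt xi D tstep dord yp k \<longleftrightarrow>
     \<comment> \<open>Phase 1\<close>
     feas l u Iz (xt k) \<and> f (xt k) \<le> f (x k) \<and>
     \<comment> \<open>Phase 2.A\<close>
     distinct (dord k) \<and> set (dord k) = D k \<and>
     (let L = dord k;
          r = (\<lambda>j. discrete_search f l u Iz (tstep k (L!j)) (xt k) (rvec (L!j)) (xi k))
      in (\<exists>j < length L. (\<forall>i<j. r i = 0) \<and> 0 < r j \<and>
             yp k = xt k + real (r j) *\<^sub>R rvec (L!j) \<and>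
             (\<forall>i<j. tstep (Suc k) (L!i) = max 1 (tstep k (L!i) div 2)) \<and>
             tstep (Suc k) (L!j) = r j \<and>
             (\<forall>i. j < i \<and> i < length L \<longrightarrow> tstep (Suc k) (L!i) = tstep k (L!i)))
       \<or> ((\<forall>i<length L. r i = 0) \<and> yp k = xt k \<and>
             (\<forall>i<length L. tstep (Suc k) (L!i) = max 1 (tstep k (L!i) div 2)))) \<and>
     \<comment> \<open>Phase 2.B\<close>
     (if yp k = xt k \<and> (\<forall>d\<in>D k. tstep k d = 1)
      then xi (Suc k) = \<theta> * xi k \<and>
           (\<exists>N. N \<subseteq> {d. prim_dir Iz d \<and> feas l u Iz (xt k + rvec d)} \<and> D (Suc k) = D k \<union> N)
      else xi (Suc k) = xi k \<and> D (Suc k) = D k) \<and>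
     (\<forall>d. d \<in> D (Suc k) - D k \<longrightarrow> 1 \<le> tstep (Suc k) d) \<and>
     \<comment> \<open>Phase 3\<close>
     feas l u Iz (x (Suc k)) \<and> f (x (Suc k)) \<le> f (yp k)"

definition dfndfl_run ::
  "(real^'n \<Rightarrow> real) \<Rightarrow> real^'n \<Rightarrow> real^'n \<Rightarrow> 'n set \<Rightarrow> real \<Rightarrow>
   (nat \<Rightarrow> real^'n) \<Rightarrow> (nat \<Rightarrow> real^'n) \<Rightarrow> (nat \<Rightarrow> real) \<Rightarrow> (nat \<Rightarrow> (int^'n) set) \<Rightarrow>
   (nat \<Rightarrow> int^'n \<Rightarrow> nat) \<Rightarrow> (nat \<Rightarrow> (int^'n) list) \<Rightarrow> (nat \<Rightarrow> real^'n) \<Rightarrow> bool" where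
  "dfndfl_run f l u Iz \<theta> x xt xi D tstep dord yp \<longleftrightarrow>
     feas l u Iz (x 0) \<and> 0 < xi 0 \<and> finite (D 0) \<and> (\<forall>d\<in>D 0. prim_dir Iz d) \<and>
     (\<forall>d\<in>D 0. 1 \<le> tstep 0 d) \<and>
     (\<forall>k. dfndfl_step f l u Iz \<theta> x xt xi D tstep dord yp k)"

end

theory Submission
  imports Defs
begin

text \<open>Both \<open>\<xi>\<^sub>k\<close> and \<open>f(x\<^sub>k)\<close> are nonincreasing, and \<open>f\<close> is bounded below on the compact box.
  Suppose \<open>\<xi>\<^sub>k\<close> were reduced only finitely often. Then from some iteration on \<open>\<xi>\<^sub>k = c > 0\<close>
  and the direction set is a fixed finite set \<open>E\<close>. A successful Phase 2.A decreases \<open>f(x\<^sub>k)\<close> by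
  \<open>c\<close>, so only finitely many iterations succeed; afterwards every tentative step along \<open>E\<close> is
  halved down to \<open>1\<close>, which is exactly the reduction test of Phase 2.B, a contradiction.
  So \<open>\<xi>\<close> is multiplied by \<open>\<theta> < 1\<close> infinitely often, and a nonincreasing nonnegative sequence
  with this property tends to \<open>0\<close>.\<close>

lemma decseq_bounded_eventually_drop_less:
  fixes g :: "nat \<Rightarrow> real"
  assumes "decseq g" "\<And>k. B \<le> g k" "0 < c"
  shows "\<forall>\<^sub>F k in sequentially. g k - c < g (Suc k)"
proof -
  obtain L where "g \<longlonglongrightarrow> L"
    using decseq_convergent assms(1,2) by blast
  then have "(\<lambda>k. g k - g (Suc k)) \<longlonglongrightarrow> L - L"
    by (intro tendsto_diff LIMSEQ_Suc)
  then have "\<forall>\<^sub>F k in sequentially. g k - g (Suc k) < c"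
    using order_tendstoD(2) assms(3) by fastforce
  then show ?thesis
    by eventually_elim simp
qed

lemma decseq_frequently_contracted_tendsto_0:
  fixes a :: "nat \<Rightarrow> real"
  assumes "decseq a" "\<And>k. 0 \<le> a k" "\<theta> < 1"
    and "\<exists>\<^sub>F k in sequentially. a (Suc k) \<le> \<theta> * a k"
  shows "a \<longlonglongrightarrow> 0"
proof -
  obtain L where L: "a \<longlonglongrightarrow> L"
    using decseq_convergent assms(1,2) by blast
  have "0 \<le> L"
    using L assms(2) by (simp add: LIMSEQ_le_const)
  moreover have "\<not> 0 < L"
  proof
    assume "0 < L"
    have "(\<lambda>k. a (Suc k) - \<theta> * a k) \<longlonglongrightarrow> L - \<theta> * L"
      using L by (intro tendsto_diff tendsto_mult_left LIMSEQ_Suc)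
    moreover have "0 < L - \<theta> * L"
      using \<open>0 < L\<close> assms(3) by simp
    ultimately have "\<forall>\<^sub>F k in sequentially. 0 < a (Suc k) - \<theta> * a k"
      by (rule order_tendstoD(1))
    then have "\<forall>\<^sub>F k in sequentially. \<not> a (Suc k) \<le> \<theta> * a k"
      by eventually_elim simp
    then show False
      using assms(4) by (simp add: not_frequently[symmetric])
  qed
  ultimately show ?thesis
    using L by simp
qed

lemma eventually_stationary_imp_eventually_const:
  assumes "\<forall>\<^sub>F k in sequentially. a (Suc k) = a k"
  obtains c where "\<forall>\<^sub>F k in sequentially. a k = c"
proof -
  obtain N where N: "\<And>k. N \<le> k \<Longrightarrow> a (Suc k) = a k"
    using assms by (auto simp: eventually_sequentially)
  have "a (N + n) = a N" for n
    by (induction n) (use N in auto)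
  then have "\<forall>\<^sub>F k in sequentially. a k = a N"
    unfolding eventually_sequentially by (metis le_add_diff_inverse)
  then show thesis
    by (rule that)
qed

lemma eventually_halving_reaches_one:
  fixes s :: "nat \<Rightarrow> nat"
  assumes "\<forall>\<^sub>F j in sequentially. s (Suc j) = max 1 (s j div 2)"
  shows "\<forall>\<^sub>F j in sequentially. s j = 1"
proof -
  obtain N where N: "\<And>j. N \<le> j \<Longrightarrow> s (Suc j) = max 1 (s j div 2)"
    using assms by (auto simp: eventually_sequentially)
  \<comment> \<open>Halving cannot decrease a minimal value of \<open>s\<close> after \<open>N\<close>, so that value is \<open>1\<close>.\<close>
  obtain m where m: "Suc N \<le> m" "\<And>j. Suc N \<le> j \<Longrightarrow> s m \<le> s j"
    using ex_has_least_nat[of "\<lambda>j. Suc N \<le> j" "Suc N" s] by auto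
  have "1 \<le> s m"
    using N[of "m - 1"] m(1) by simp
  moreover have "s m \<le> max 1 (s m div 2)"
    using m(2)[of "Suc m"] N[of m] m(1) by simp
  ultimately have "s m = 1"
    by linarith
  then have "s (m + n) = 1" for n
    by (induction n) (use N m(1) in auto)
  then show ?thesis
    unfolding eventually_sequentially by (metis le_add_diff_inverse)
qed

lemma ds_expand_preserves:
  "ok a \<Longrightarrow> ok (ds_expand n ok ab a)"
  by (induction n arbitrary: a) (auto simp: Let_def)

lemma discrete_search_pos_imp_decrease:
  assumes "0 < discrete_search f l u Iz t w p xi"
  shows "f (w + real (discrete_search f l u Iz t w p xi) *\<^sub>R p) \<le> f w - xi"
  using assms ds_expand_preserves[where ok = "\<lambda>b::nat. f (w + real b *\<^sub>R p) \<le> f w - xi"]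
  unfolding discrete_search_def Let_def by (auto split: if_splits)

lemma dfndfl_step_descent:
  assumes "dfndfl_step f l u Iz \<theta> x xt xi D tstep dord yp k"
  shows "f (xt k) \<le> f (x k)" "f (x (Suc k)) \<le> f (yp k)" "feas l u Iz (x (Suc k))"
  using assms unfolding dfndfl_step_def by auto

lemma dfndfl_step_finite_dirs:
  assumes "dfndfl_step f l u Iz \<theta> x xt xi D tstep dord yp k"
  shows "finite (D k)"
  using assms unfolding dfndfl_step_def by (metis List.finite_set)

lemma dfndfl_step_xi_update:
  assumes "dfndfl_step f l u Iz \<theta> x xt xi D tstep dord yp k"
  shows "if yp k = xt k \<and> (\<forall>d\<in>D k. tstep k d = 1)
         then xi (Suc k) = \<theta> * xi k
         else xi (Suc k) = xi k \<and> D (Suc k) = D k"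
  using assms unfolding dfndfl_step_def by (auto split: if_splits)

lemma dfndfl_step_success_or_halving:
  assumes st: "dfndfl_step f l u Iz \<theta> x xt xi D tstep dord yp k"
  shows "f (yp k) \<le> f (xt k) - xi k \<or>
    yp k = xt k \<and> (\<forall>d\<in>D k. tstep (Suc k) d = max 1 (tstep k d div 2))"
proof -
  define L where "L = dord k"
  define r where "r j = discrete_search f l u Iz (tstep k (L!j)) (xt k) (rvec (L!j)) (xi k)" for j
  have set_L: "set L = D k"
    using st unfolding dfndfl_step_def L_def by auto
  have "(\<exists>j < length L. 0 < r j \<and> yp k = xt k + real (r j) *\<^sub>R rvec (L!j))
     \<or> yp k = xt k \<and> (\<forall>i<length L. tstep (Suc k) (L!i) = max 1 (tstep k (L!i) div 2))"
    using st unfolding dfndfl_step_def Let_def L_def r_def by blast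
  then show ?thesis
  proof (elim disjE exE conjE)
    fix j
    assume "0 < r j" "yp k = xt k + real (r j) *\<^sub>R rvec (L!j)"
    then have "f (yp k) \<le> f (xt k) - xi k"
      using discrete_search_pos_imp_decrease unfolding r_def by metis
    then show ?thesis ..
  next
    assume "yp k = xt k" "\<forall>i<length L. tstep (Suc k) (L!i) = max 1 (tstep k (L!i) div 2)"
    then show ?thesis
      using set_L by (metis in_set_conv_nth)
  qed
qed

lemma dfndfl_run_step:
  "dfndfl_run f l u Iz \<theta> x xt xi D tstep dord yp \<Longrightarrow> dfndfl_step f l u Iz \<theta> x xt xi D tstep dord yp k"
  unfolding dfndfl_run_def by blast

lemma dfndfl_run_xi_pos:
  assumes run: "dfndfl_run f l u Iz \<theta> x xt xi D tstep dord yp" and "0 < \<theta>"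
  shows "0 < xi k"
proof (induction k)
  case 0
  then show ?case
    using run unfolding dfndfl_run_def by blast
next
  case (Suc k)
  then show ?case
    using dfndfl_step_xi_update[OF dfndfl_run_step[OF run], of k] \<open>0 < \<theta>\<close>
    by (auto split: if_splits)
qed

lemma dfndfl_run_xi_decseq:
  assumes run: "dfndfl_run f l u Iz \<theta> x xt xi D tstep dord yp" and "0 < \<theta>" "\<theta> < 1"
  shows "decseq xi"
proof (rule decseq_SucI)
  fix k
  have "\<theta> * xi k \<le> xi k"
    using dfndfl_run_xi_pos[OF run \<open>0 < \<theta>\<close>, of k] \<open>\<theta> < 1\<close> by simp
  then show "xi (Suc k) \<le> xi k"
    using dfndfl_step_xi_update[OF dfndfl_run_step[OF run], of k] by (auto split: if_splits)
qed

lemma dfndfl_run_feas: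
  assumes run: "dfndfl_run f l u Iz \<theta> x xt xi D tstep dord yp"
  shows "feas l u Iz (x k)"
proof (cases k)
  case 0
  then show ?thesis
    using run unfolding dfndfl_run_def by blast
next
  case (Suc j)
  then show ?thesis
    using dfndfl_step_descent(3)[OF dfndfl_run_step[OF run]] by blast
qed

lemma dfndfl_run_f_bounded_below:
  assumes cont: "continuous_on {x. \<forall>i. l$i \<le> x$i \<and> x$i \<le> u$i} f"
    and run: "dfndfl_run f l u Iz \<theta> x xt xi D tstep dord yp"
  obtains B where "\<And>k. B \<le> f (x k)"
proof -
  have "compact (f ` cbox l u)"
    using cont by (intro compact_continuous_image compact_cbox) (simp add: interval_cart)
  then obtain B where B: "\<And>y. y \<in> cbox l u \<Longrightarrow> \<bar>f y\<bar> \<le> B"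
    by (meson bounded_real compact_imp_bounded image_eqI)
  have "x k \<in> cbox l u" for k
    using dfndfl_run_feas[OF run, of k] by (simp add: feas_def interval_cart)
  then show thesis
    using B by (intro that[of "- B"]) (meson abs_le_D2 minus_le_iff)
qed

lemma dfndfl_run_success_decrease:
  assumes run: "dfndfl_run f l u Iz \<theta> x xt xi D tstep dord yp"
    and "f (yp k) \<le> f (xt k) - xi k"
  shows "f (x (Suc k)) \<le> f (x k) - xi k"
  using dfndfl_step_descent(1,2)[OF dfndfl_run_step[OF run], of k] assms(2) by linarith

lemma dfndfl_run_f_decseq:
  assumes run: "dfndfl_run f l u Iz \<theta> x xt xi D tstep dord yp" and "0 < \<theta>"
  shows "decseq (\<lambda>k. f (x k))"
proof (rule decseq_SucI)
  fix k
  have "0 < xi k"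
    using dfndfl_run_xi_pos[OF run \<open>0 < \<theta>\<close>] .
  then show "f (x (Suc k)) \<le> f (x k)"
    using dfndfl_step_success_or_halving[OF dfndfl_run_step[OF run], of k]
      dfndfl_run_success_decrease[OF run, of k] dfndfl_step_descent(1,2)[OF dfndfl_run_step[OF run], of k]
    by auto
qed

lemma dfndfl_run_xi_frequently_reduced:
  assumes run: "dfndfl_run f l u Iz \<theta> x xt xi D tstep dord yp" and "0 < \<theta>"
    and bounded: "\<And>k. B \<le> f (x k)"
  shows "\<exists>\<^sub>F k in sequentially. xi (Suc k) = \<theta> * xi k"
proof (rule ccontr)
  note step = dfndfl_run_step[OF run]
  assume "\<not> ?thesis"
  then have "\<forall>\<^sub>F k in sequentially. xi (Suc k) \<noteq> \<theta> * xi k"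
    by (simp add: not_frequently)
  then have kept: "\<forall>\<^sub>F k in sequentially. \<not> (yp k = xt k \<and> (\<forall>d\<in>D k. tstep k d = 1))
      \<and> xi (Suc k) = xi k \<and> D (Suc k) = D k"
    by eventually_elim (metis dfndfl_step_xi_update[OF step])
  have "\<forall>\<^sub>F k in sequentially. xi (Suc k) = xi k"
    using kept by eventually_elim simp
  then obtain c where c: "\<forall>\<^sub>F k in sequentially. xi k = c"
    by (rule eventually_stationary_imp_eventually_const)
  have "\<forall>\<^sub>F k in sequentially. D (Suc k) = D k"
    using kept by eventually_elim simp
  then obtain E where E: "\<forall>\<^sub>F k in sequentially. D k = E"
    by (rule eventually_stationary_imp_eventually_const)
  have "0 < c" "finite E"
    using eventually_happens'[OF _ eventually_conj[OF c E]]
      dfndfl_run_xi_pos[OF run \<open>0 < \<theta>\<close>] dfndfl_step_finite_dirs[OF step] by auto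
  have "\<forall>\<^sub>F k in sequentially. f (x k) - c < f (x (Suc k))"
    using decseq_bounded_eventually_drop_less[OF dfndfl_run_f_decseq[OF run \<open>0 < \<theta>\<close>] bounded \<open>0 < c\<close>] .
  then have "\<forall>\<^sub>F k in sequentially. \<not> f (yp k) \<le> f (xt k) - xi k"
    using c by eventually_elim (use dfndfl_run_success_decrease[OF run] in force)
  then have failing: "\<forall>\<^sub>F k in sequentially.
      yp k = xt k \<and> (\<forall>d\<in>E. tstep (Suc k) d = max 1 (tstep k d div 2))"
    using E by eventually_elim (use dfndfl_step_success_or_halving[OF step] in blast)
  have "\<forall>\<^sub>F k in sequentially. tstep k d = 1" if "d \<in> E" for d
    using failing that by (intro eventually_halving_reaches_one) (auto elim: eventually_mono)
  then have "\<forall>\<^sub>F k in sequentially. \<forall>d\<in>E. tstep k d = 1"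
    using \<open>finite E\<close> by (intro eventually_ball_finite) auto
  with kept failing E have "\<forall>\<^sub>F k in sequentially. False"
    by eventually_elim auto
  then show False
    by simp
qed

theorem mainTheorem8:
  fixes f :: "real^'n \<Rightarrow> real" and l u :: "real^'n" and Iz :: "'n set" and \<theta> :: real
    and x xt yp :: "nat \<Rightarrow> real^'n" and xi :: "nat \<Rightarrow> real"
    and D :: "nat \<Rightarrow> (int^'n) set" and tstep :: "nat \<Rightarrow> int^'n \<Rightarrow> nat"
    and dord :: "nat \<Rightarrow> (int^'n) list"
  assumes box: "\<forall>i. l$i < u$i"
    and intbounds: "\<forall>i\<in>Iz. l$i \<in> \<int> \<and> u$i \<in> \<int>"
    and cont: "continuous_on {x. \<forall>i. l$i \<le> x$i \<and> x$i \<le> u$i} f"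
    and lip: "\<exists>L. \<forall>y z. (\<forall>i. l$i \<le> y$i \<and> y$i \<le> u$i) \<and> (\<forall>i. l$i \<le> z$i \<and> z$i \<le> u$i)
                 \<and> (\<forall>i\<in>Iz. y$i = z$i) \<longrightarrow> \<bar>f y - f z\<bar> \<le> L * norm (y - z)"
    and theta: "0 < \<theta>" "\<theta> < 1"
    and run: "dfndfl_run f l u Iz \<theta> x xt xi D tstep dord yp"
  shows "xi \<longlonglongrightarrow> 0"
proof -
  obtain B where "\<And>k. B \<le> f (x k)"
    using dfndfl_run_f_bounded_below[OF cont run] by blast
  then have "\<exists>\<^sub>F k in sequentially. xi (Suc k) = \<theta> * xi k"
    by (rule dfndfl_run_xi_frequently_reduced[OF run theta(1)])
  then have "\<exists>\<^sub>F k in sequentially. xi (Suc k) \<le> \<theta> * xi k"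
    by (rule frequently_elim1) simp
  then show ?thesis
    using dfndfl_run_xi_decseq[OF run theta] dfndfl_run_xi_pos[OF run theta(1)] theta(2)
    by (intro decseq_frequently_contracted_tendsto_0) (auto intro: less_imp_le)
qed

end
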